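(* Let $n,N\in\mathbb{N}$, $0\le\rho\le1$, $m\in\mathbb{R}$, and $a\in L^\infty S^m_\rho(n,N)$. For $x\in\mathbb{R}^n$ and $Y=(y_1,\dots,y_N)\in\mathbb{R}^{nN}$ let \[ K(x,Y):=\int_{\mathbb{R}^{nN}} a(x,\Xi)\prod_{j=1}^N e^{i(x-y_j)\cdot\xi_j}\,d\Xi . \] Suppose that either $\rho>0$ (and $m\in\mathbb{R}$ arbitrary), or $\rho=0$ and $m<-nN$. Then for all $x,Y$ such that $S:=\{j\in\{1,\dots,N\}: |x-y_j|\ge1\}\neq\emptyset$ and all numbers $N_j\ge0$ ($j\in S$), one has \[ |K(x,Y)|\le C\prod_{j\in S}|x-y_j|^{-N_j}, \] with $C$ independent of $x$ and $Y$.
   Context: For $\Xi=(\xi_1,\dots,\xi_N)\in\mathbb{R}^{nN}$, $\langle\Xi\rangle=(1+|\Xi|^2)^{1/2}$. A function $a:\mathbb{R}^n\times\mathbb{R}^{nN}\to\mathbb{C}$ belongs to $L^\infty S^m_\rho(n,N)$ if for every multi-index $\alpha\in\mathbb{Z}_+^{nN}$ there is $C_\alpha$ with $\operatorname{ess\,sup}_x|\partial_\Xi^\alpha a(x,\Xi)|\le C_\alpha\langle\Xi\rangle^{m-\rho|\alpha|}$. The integral defining $K$ is understood as an oscillatory integral (sum of the pieces $a\varphi_k$ over a dyadic Littlewood–Paley partition of unity in $\mathbb{R}^{nN}$). *)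

theory Defs
  imports "HOL-Analysis.Analysis"
begin

text \<open>For ds a list of standard basis vectors this is the partial derivative
  of multi-index alpha, |alpha| = length ds.\<close>
fun dderiv :: "'a::euclidean_space list \<Rightarrow> ('a \<Rightarrow> 'b::real_normed_vector) \<Rightarrow> 'a \<Rightarrow> 'b" where
  "dderiv [] f = f"
| "dderiv (v # ds) f = (\<lambda>z. frechet_derivative (dderiv ds f) (at z) v)"

definition smooth_fun :: "('a::euclidean_space \<Rightarrow> 'b::real_normed_vector) \<Rightarrow> bool" where
  "smooth_fun f \<longleftrightarrow> (\<forall>ds \<in> lists Basis. \<forall>z. dderiv ds f differentiable (at z))"

definition jbr :: "'a::real_normed_vector \<Rightarrow> real" where
  "jbr z = sqrt (1 + (norm z)\<^sup>2)"

text \<open>Points of R^n are real^'n, points of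
  R^{nN} are (real^'n)^'N, i.e. Xi = (xi_1,...,xi_N) with Xi $ j = xi_j.\<close>
definition LinfS :: "real \<Rightarrow> real \<Rightarrow> (real^'n \<Rightarrow> (real^'n)^'N \<Rightarrow> complex) \<Rightarrow> bool" where
  "LinfS m \<rho> a \<longleftrightarrow>
     (\<lambda>p. a (fst p) (snd p)) \<in> borel_measurable borel \<and>
     (AE x in lborel. smooth_fun (a x)) \<and>
     (\<forall>ds \<in> lists Basis. \<exists>C. \<forall>\<Xi>.
        AE x in lborel. norm (dderiv ds (a x) \<Xi>) \<le> C * jbr \<Xi> powr (m - \<rho> * real (length ds)))"

text \<open>Dyadic Littlewood-Paley partition of unity generated by phi0:
  phi0 smooth, equal to 1 on |Xi| \<le> 1 and to 0 on |Xi| \<ge> 2;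
  phi_0 = phi0, phi_k(Xi) = phi0(2^-k Xi) - phi0(2^-(k-1) Xi) for k \<ge> 1.\<close>
definition LP_generator :: "('a::euclidean_space \<Rightarrow> real) \<Rightarrow> bool" where
  "LP_generator \<phi>0 \<longleftrightarrow> smooth_fun \<phi>0 \<and>
     (\<forall>z. 0 \<le> \<phi>0 z \<and> \<phi>0 z \<le> 1) \<and>
     (\<forall>z. norm z \<le> 1 \<longrightarrow> \<phi>0 z = 1) \<and> (\<forall>z. norm z \<ge> 2 \<longrightarrow> \<phi>0 z = 0)"

definition LP_piece :: "('a::euclidean_space \<Rightarrow> real) \<Rightarrow> nat \<Rightarrow> 'a \<Rightarrow> real" where
  "LP_piece \<phi>0 k z = (if k = 0 then \<phi>0 z
      else \<phi>0 ((1 / 2 ^ k) *\<^sub>R z) - \<phi>0 ((1 / 2 ^ (k - 1)) *\<^sub>R z))"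

definition phase :: "real^'n \<Rightarrow> (real^'n)^'N \<Rightarrow> (real^'n)^'N \<Rightarrow> complex" where
  "phase x Y \<Xi> = (\<Prod>j\<in>UNIV. exp (\<i> * complex_of_real ((x - Y $ j) \<bullet> (\<Xi> $ j))))"

definition K_piece :: "(real^'n \<Rightarrow> (real^'n)^'N \<Rightarrow> complex) \<Rightarrow> ((real^'n)^'N \<Rightarrow> real)
     \<Rightarrow> real^'n \<Rightarrow> (real^'n)^'N \<Rightarrow> nat \<Rightarrow> complex" where
  "K_piece a \<phi>0 x Y k =
     (LINT \<Xi>|lborel. a x \<Xi> * complex_of_real (LP_piece \<phi>0 k \<Xi>) * phase x Y \<Xi>)"

definition K_osc :: "(real^'n \<Rightarrow> (real^'n)^'N \<Rightarrow> complex) \<Rightarrow> ((real^'n)^'N \<Rightarrow> real)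
     \<Rightarrow> real^'n \<Rightarrow> (real^'n)^'N \<Rightarrow> complex" where
  "K_osc a \<phi>0 x Y = (\<Sum>k. K_piece a \<phi>0 x Y k)"

definition far_set :: "real^'n \<Rightarrow> (real^'n)^'N \<Rightarrow> 'N set" where
  "far_set x Y = {j. norm (x - Y $ j) \<ge> 1}"

end

theory Submission
  imports Defs
begin

text \<open>Write W = (x - y_1, ..., x - y_N), so that the k-th dyadic piece of K(x,Y) is the integral
  of a(x,\<Xi>) \<phi>_k(\<Xi>) exp(i W \<cdot> \<Xi>) over the annulus |\<Xi>| ~ 2^k. Integrating by parts along the
  coordinate directions in a list ds multiplies the piece by \<Prod>_{e \<in> ds} W \<cdot> e and replaces
  a \<phi>_k by its derivative of order |ds|, which by the symbol estimates and the Leibniz rule is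
  O(2^(k(m - \<rho>|ds|))) on a set of measure O(2^(knN)). For each far index j one differentiates at
  least N_j times along a dominant coordinate of x - y_j, and at least M_0 times in total, where
  m + nN - \<rho> M_0 < 0; such an M_0 exists precisely when \<rho> > 0 or m < -nN. The pieces are then
  bounded by \<Prod>_j |x - y_j|^(-N_j) times a convergent geometric sequence in k. The constants depend
  only on the symbol constants, and these hold simultaneously for almost every x.\<close>

section \<open>Iterated directional derivatives\<close>

lemma dderiv_append: "dderiv ds (dderiv es f) = dderiv (ds @ es) f"
  by (induction ds) auto

lemma dderiv_zero [simp]: "dderiv ds (\<lambda>_. 0) = (\<lambda>_. 0)"
  by (induction ds) (auto simp: frechet_derivative_const)

lemma smooth_fun_dderiv:
  "smooth_fun f \<Longrightarrow> ds \<in> lists Basis \<Longrightarrow> smooth_fun (dderiv ds f)"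
  unfolding smooth_fun_def by (auto simp: dderiv_append)

lemma smooth_fun_differentiable:
  "smooth_fun f \<Longrightarrow> ds \<in> lists Basis \<Longrightarrow> dderiv ds f differentiable (at z)"
  unfolding smooth_fun_def by auto

lemma smooth_fun_has_derivative:
  "smooth_fun f \<Longrightarrow> ds \<in> lists Basis \<Longrightarrow>
     (dderiv ds f has_derivative frechet_derivative (dderiv ds f) (at z)) (at z)"
  using smooth_fun_differentiable frechet_derivative_works by blast

lemma smooth_fun_continuous_on:
  "smooth_fun f \<Longrightarrow> ds \<in> lists Basis \<Longrightarrow> continuous_on S (dderiv ds f)"
  by (meson continuous_at_imp_continuous_on differentiable_imp_continuous_within
      smooth_fun_differentiable)

lemma frechet_derivative_cong_open:
  assumes "open U" "z \<in> U" "\<And>w. w \<in> U \<Longrightarrow> f w = g w"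
  shows "frechet_derivative f (at z) = frechet_derivative g (at z)"
proof -
  have "(f has_derivative f') (at z) \<longleftrightarrow> (g has_derivative f') (at z)" for f'
    using has_derivative_transform_within_open[OF _ assms(1,2), of f _ _ g]
      has_derivative_transform_within_open[OF _ assms(1,2), of g _ _ f] assms(3)
    by metis
  then show ?thesis unfolding frechet_derivative_def by simp
qed

lemma dderiv_cong_open:
  assumes "open U" "z \<in> U" "\<And>w. w \<in> U \<Longrightarrow> f w = g w"
  shows "dderiv ds f z = dderiv ds g z"
  using assms(2)
proof (induction ds arbitrary: z)
  case Nil
  then show ?case using assms(3) by simp
next
  case (Cons v ds)
  then show ?case
    using frechet_derivative_cong_open[OF assms(1) Cons(2), of "dderiv ds f" "dderiv ds g"] by simp
qed

lemma dderiv_eq_0_open: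
  assumes "open U" "z \<in> U" "\<And>w. w \<in> U \<Longrightarrow> f w = 0"
  shows "dderiv ds f z = 0"
  using dderiv_cong_open[OF assms(1,2), of f "\<lambda>_. 0" ds] assms(3) by simp

lemma dderiv_eq_0_outside_ball:
  assumes "\<And>w. norm w \<ge> R \<Longrightarrow> f w = 0" and "norm z > R"
  shows "dderiv ds f z = 0"
  by (rule dderiv_eq_0_open[of "{z. norm z > R}"])
     (use assms in \<open>auto intro: open_Collect_less continuous_intros\<close>)

lemma dderiv_linear:
  fixes f :: "'a::euclidean_space \<Rightarrow> 'b::real_normed_vector"
  assumes "bounded_linear L" "smooth_fun f" "ds \<in> lists Basis"
  shows "dderiv ds (\<lambda>z. L (f z)) = (\<lambda>z. L (dderiv ds f z))"
  using assms(3)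
proof (induction ds)
  case (Cons v ds)
  have "((\<lambda>z. L (dderiv ds f z)) has_derivative (\<lambda>h. L (frechet_derivative (dderiv ds f) (at z) h))) (at z)" for z
    using bounded_linear.has_derivative[OF assms(1) smooth_fun_has_derivative[OF assms(2)]] Cons
    by simp
  then have "frechet_derivative (\<lambda>z. L (dderiv ds f z)) (at z) = (\<lambda>h. L (frechet_derivative (dderiv ds f) (at z) h))" for z
    by (metis frechet_derivative_at)
  then show ?case
    using Cons by simp
qed simp

lemma smooth_fun_linear:
  fixes f :: "'a::euclidean_space \<Rightarrow> 'b::real_normed_vector"
  assumes "bounded_linear L" "smooth_fun f"
  shows "smooth_fun (\<lambda>z. L (f z))"
  unfolding smooth_fun_def
proof (intro ballI allI)
  fix ds :: "'a list" and z assume ds: "ds \<in> lists Basis"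
  show "dderiv ds (\<lambda>z. L (f z)) differentiable at z"
    unfolding dderiv_linear[OF assms ds]
    using differentiable_compose[OF bounded_linear_imp_differentiable[OF assms(1)]
        smooth_fun_differentiable[OF assms(2) ds]]
    by (simp add: o_def)
qed

lemma dderiv_diff:
  fixes f g :: "'a::euclidean_space \<Rightarrow> 'b::real_normed_vector"
  assumes "smooth_fun f" "smooth_fun g" "ds \<in> lists Basis"
  shows "dderiv ds (\<lambda>z. f z - g z) = (\<lambda>z. dderiv ds f z - dderiv ds g z)"
  using assms(3)
proof (induction ds)
  case (Cons v ds)
  have "((\<lambda>z. dderiv ds f z - dderiv ds g z) has_derivative
      (\<lambda>h. frechet_derivative (dderiv ds f) (at z) h - frechet_derivative (dderiv ds g) (at z) h)) (at z)" for z
    using Cons by (intro has_derivative_diff smooth_fun_has_derivative assms) auto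
  then have "frechet_derivative (\<lambda>z. dderiv ds f z - dderiv ds g z) (at z) =
      (\<lambda>h. frechet_derivative (dderiv ds f) (at z) h - frechet_derivative (dderiv ds g) (at z) h)" for z
    by (metis frechet_derivative_at)
  then show ?case
    using Cons by simp
qed simp

lemma smooth_fun_diff:
  fixes f g :: "'a::euclidean_space \<Rightarrow> 'b::real_normed_vector"
  assumes "smooth_fun f" "smooth_fun g"
  shows "smooth_fun (\<lambda>z. f z - g z)"
  unfolding smooth_fun_def
  by (simp add: dderiv_diff[OF assms] smooth_fun_differentiable[OF assms(1)]
      smooth_fun_differentiable[OF assms(2)])

lemma dderiv_rescale:
  fixes f :: "'a::euclidean_space \<Rightarrow> 'b::real_normed_vector"
  assumes "smooth_fun f" "ds \<in> lists Basis"
  shows "dderiv ds (\<lambda>z. f (c *\<^sub>R z)) = (\<lambda>z. (c ^ length ds) *\<^sub>R dderiv ds f (c *\<^sub>R z))"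
  using assms(2)
proof (induction ds)
  case (Cons v ds)
  show ?case
  proof
    fix z
    let ?D = "frechet_derivative (dderiv ds f) (at (c *\<^sub>R z))"
    have D: "(dderiv ds f has_derivative ?D) (at (c *\<^sub>R z))"
      using smooth_fun_has_derivative[OF assms(1)] Cons by simp
    have "((\<lambda>z. (c ^ length ds) *\<^sub>R dderiv ds f (c *\<^sub>R z)) has_derivative
        (\<lambda>h. (c ^ length ds) *\<^sub>R ?D (c *\<^sub>R h))) (at z)"
      using has_derivative_compose[of "\<lambda>z. c *\<^sub>R z" "\<lambda>h. c *\<^sub>R h" z UNIV "dderiv ds f", OF _ D]
      by (intro has_derivative_scaleR_right) (simp add: o_def has_derivative_scaleR_right[OF has_derivative_ident])
    then have "frechet_derivative (\<lambda>z. (c ^ length ds) *\<^sub>R dderiv ds f (c *\<^sub>R z)) (at z) =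
        (\<lambda>h. (c ^ length ds) *\<^sub>R ?D (c *\<^sub>R h))"
      by (metis frechet_derivative_at)
    moreover have "?D (c *\<^sub>R v) = c *\<^sub>R ?D v"
      using D has_derivative_linear linear_scale by blast
    ultimately show "dderiv (v # ds) (\<lambda>z. f (c *\<^sub>R z)) z = (c ^ length (v # ds)) *\<^sub>R dderiv (v # ds) f (c *\<^sub>R z)"
      using Cons by (simp add: mult.commute)
  qed
qed simp

lemma smooth_fun_rescale:
  fixes f :: "'a::euclidean_space \<Rightarrow> 'b::real_normed_vector"
  assumes "smooth_fun f"
  shows "smooth_fun (\<lambda>z. f (c *\<^sub>R z))"
  unfolding smooth_fun_def
proof (intro ballI allI)
  fix ds :: "'a list" and z assume ds: "ds \<in> lists Basis"
  have "(\<lambda>z. dderiv ds f (c *\<^sub>R z)) differentiable at z"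
    using differentiable_chain_at[of "\<lambda>z. c *\<^sub>R z" z "dderiv ds f"] smooth_fun_differentiable[OF assms ds]
    by (simp add: o_def)
  then show "dderiv ds (\<lambda>z. f (c *\<^sub>R z)) differentiable at z"
    unfolding dderiv_rescale[OF assms ds] by simp
qed

fun bipartitions :: "'a list \<Rightarrow> ('a list \<times> 'a list) list" where
  "bipartitions [] = [([], [])]"
| "bipartitions (v # ds) =
     map (\<lambda>(p, q). (v # p, q)) (bipartitions ds) @ map (\<lambda>(p, q). (p, v # q)) (bipartitions ds)"

lemma bipartitions_length_set:
  "(p, q) \<in> set (bipartitions ds) \<Longrightarrow>
     length p + length q = length ds \<and> set p \<subseteq> set ds \<and> set q \<subseteq> set ds"
  by (induction ds arbitrary: p q) (auto, blast+)

lemma has_derivative_sum_list: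
  assumes "\<And>x. x \<in> set xs \<Longrightarrow> (F x has_derivative F' x) (at z)"
  shows "((\<lambda>z. \<Sum>x\<leftarrow>xs. F x z) has_derivative (\<lambda>h. \<Sum>x\<leftarrow>xs. F' x h)) (at z)"
  using assms by (induction xs) (auto intro!: has_derivative_add)

lemma dderiv_mult:
  fixes f g :: "'a::euclidean_space \<Rightarrow> 'b::real_normed_algebra"
  assumes f: "smooth_fun f" and g: "smooth_fun g" and "ds \<in> lists Basis"
  shows "dderiv ds (\<lambda>z. f z * g z) =
           (\<lambda>z. \<Sum>pq\<leftarrow>bipartitions ds. dderiv (fst pq) f z * dderiv (snd pq) g z)"
  using assms(3)
proof (induction ds)
  case (Cons v ds)
  show ?case
  proof
    fix z
    let ?F' = "\<lambda>pq h. dderiv (fst pq) f z * frechet_derivative (dderiv (snd pq) g) (at z) h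
                  + frechet_derivative (dderiv (fst pq) f) (at z) h * dderiv (snd pq) g z"
    have "((\<lambda>z. dderiv (fst pq) f z * dderiv (snd pq) g z) has_derivative ?F' pq) (at z)"
      if "pq \<in> set (bipartitions ds)" for pq
      using bipartitions_length_set[of "fst pq" "snd pq" ds] that Cons
      by (intro has_derivative_mult smooth_fun_has_derivative f g) auto
    then have "((\<lambda>z. \<Sum>pq\<leftarrow>bipartitions ds. dderiv (fst pq) f z * dderiv (snd pq) g z)
        has_derivative (\<lambda>h. \<Sum>pq\<leftarrow>bipartitions ds. ?F' pq h)) (at z)"
      by (rule has_derivative_sum_list)
    from frechet_derivative_at[OF this, symmetric]
    have "frechet_derivative (\<lambda>z. \<Sum>pq\<leftarrow>bipartitions ds. dderiv (fst pq) f z * dderiv (snd pq) g z) (at z)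
        = (\<lambda>h. \<Sum>pq\<leftarrow>bipartitions ds. ?F' pq h)" .
    then have "dderiv (v # ds) (\<lambda>z. f z * g z) z = (\<Sum>pq\<leftarrow>bipartitions ds. ?F' pq v)"
      using Cons by simp
    also have "\<dots> = (\<Sum>pq\<leftarrow>bipartitions (v # ds). dderiv (fst pq) f z * dderiv (snd pq) g z)"
      by (simp add: sum_list_addf case_prod_beta' o_def add.commute)
    finally show "dderiv (v # ds) (\<lambda>z. f z * g z) z =
        (\<Sum>pq\<leftarrow>bipartitions (v # ds). dderiv (fst pq) f z * dderiv (snd pq) g z)" .
  qed
qed simp

lemma differentiable_sum_list:
  "(\<And>x. x \<in> set xs \<Longrightarrow> F x differentiable net) \<Longrightarrow> (\<lambda>z. \<Sum>x\<leftarrow>xs. F x z) differentiable net"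
  by (induction xs) auto

lemma smooth_fun_mult:
  fixes f g :: "'a::euclidean_space \<Rightarrow> 'b::real_normed_algebra"
  assumes "smooth_fun f" "smooth_fun g"
  shows "smooth_fun (\<lambda>z. f z * g z)"
  unfolding smooth_fun_def
proof (intro ballI allI)
  fix ds :: "'a list" and z assume ds: "ds \<in> lists Basis"
  have "(\<lambda>z. dderiv (fst pq) f z * dderiv (snd pq) g z) differentiable at z"
    if "pq \<in> set (bipartitions ds)" for pq
    using bipartitions_length_set[of "fst pq" "snd pq" ds] that ds
    by (intro differentiable_mult smooth_fun_differentiable assms) auto
  then show "dderiv ds (\<lambda>z. f z * g z) differentiable at z"
    unfolding dderiv_mult[OF assms ds] by (rule differentiable_sum_list)
qed

section \<open>Integration by parts against plane waves\<close>

lemma integrable_continuous_vanishing_outside_ball: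
  fixes F :: "'a::euclidean_space \<Rightarrow> 'b::{banach, second_countable_topology}"
  assumes "continuous_on UNIV F" "\<And>z. norm z > R \<Longrightarrow> F z = 0"
  shows "integrable lborel F"
proof -
  have "integrable lborel (\<lambda>x. indicator (cball 0 R) x *\<^sub>R F x)"
    by (rule borel_integrable_compact) (auto intro: continuous_on_subset[OF assms(1)])
  moreover have "(\<lambda>x. indicator (cball 0 R) x *\<^sub>R F x) = F"
    using assms(2) by (auto simp: indicator_def fun_eq_iff not_le)
  ultimately show ?thesis by simp
qed

lemma integral_lborel_translate:
  fixes F :: "'a::euclidean_space \<Rightarrow> 'b::{banach, second_countable_topology}"
  assumes "F \<in> borel_measurable borel"
  shows "(LINT z|lborel. F (z + c)) = integral\<^sup>L lborel F"
proof -
  have "integral\<^sup>L lborel F = integral\<^sup>L (distr lborel borel ((+) c)) F"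
    by (simp add: lborel_distr_plus)
  also have "\<dots> = (LINT z|lborel. F (c + z))"
    by (rule integral_distr) (auto simp: assms)
  finally show ?thesis by (simp add: add.commute)
qed

lemma integral_translate_diff_eq_0:
  fixes F :: "'a::euclidean_space \<Rightarrow> 'b::{banach, second_countable_topology}"
  assumes contF: "continuous_on UNIV F" and supp: "\<And>z. norm z \<ge> R \<Longrightarrow> F z = 0"
  shows "(LINT z|lborel. c *\<^sub>R (F (z + h) - F z)) = 0"
proof -
  have "continuous_on UNIV (\<lambda>z. F (z + h))"
    by (intro continuous_on_compose2[OF contF] continuous_intros) auto
  moreover have "F (z + h) = 0" if "norm z > R + norm h" for z
    by (rule supp) (use norm_diff_ineq[of z h] that in linarith)
  ultimately have "integrable lborel (\<lambda>z. F (z + h))"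
    by (rule integrable_continuous_vanishing_outside_ball)
  moreover have "integrable lborel F"
    by (rule integrable_continuous_vanishing_outside_ball[OF contF, of R]) (auto intro: supp)
  ultimately show ?thesis
    using integral_lborel_translate[OF borel_measurable_continuous_onI[OF contF]] by simp
qed

lemma difference_quotients_tendsto:
  fixes F :: "'a::real_normed_vector \<Rightarrow> 'b::real_normed_vector"
  assumes "(F has_derivative F') (at z)"
  shows "(\<lambda>n. real (Suc n) *\<^sub>R (F (z + (1 / real (Suc n)) *\<^sub>R e) - F z)) \<longlonglongrightarrow> F' e"
proof (cases "e = 0")
  case True
  then show ?thesis
    using assms has_derivative_linear linear_0 by fastforce
next
  case False
  define s where "s n = 1 / real (Suc n)" for n
  have bl: "bounded_linear F'"
    and quot: "((\<lambda>h. norm (F (z + h) - F z - F' h) / norm h) \<longlongrightarrow> 0) (at 0)"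
    using assms unfolding has_derivative_at by auto
  have "(\<lambda>n. s n *\<^sub>R e) \<longlonglongrightarrow> 0"
    using tendsto_scaleR[OF LIMSEQ_Suc[OF lim_const_over_n] tendsto_const, of 1 e]
    by (simp add: s_def)
  then have "filterlim (\<lambda>n. s n *\<^sub>R e) (at 0) sequentially"
    using False by (auto simp: filterlim_at s_def)
  from filterlim_compose[OF quot this]
  have "(\<lambda>n. norm (F (z + s n *\<^sub>R e) - F z - F' (s n *\<^sub>R e)) / norm (s n *\<^sub>R e)) \<longlonglongrightarrow> 0"
    by (simp add: o_def)
  moreover have "norm (F (z + s n *\<^sub>R e) - F z - F' (s n *\<^sub>R e)) / norm (s n *\<^sub>R e)
      = norm (real (Suc n) *\<^sub>R (F (z + s n *\<^sub>R e) - F z) - F' e) / norm e" for n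
  proof -
    let ?X = "F (z + s n *\<^sub>R e) - F z - F' (s n *\<^sub>R e)"
    have "real (Suc n) *\<^sub>R F' (s n *\<^sub>R e) = F' e"
      using linear_scale[OF bounded_linear.linear[OF bl]] by (simp add: s_def)
    then have "real (Suc n) *\<^sub>R (F (z + s n *\<^sub>R e) - F z) - F' e = real (Suc n) *\<^sub>R ?X"
      by (simp add: scaleR_diff_right)
    moreover have "norm (s n *\<^sub>R e) = norm e / real (Suc n)"
      by (simp add: s_def)
    ultimately show ?thesis
      by (simp add: divide_divide_eq_right mult.commute)
  qed
  ultimately have "(\<lambda>n. norm (real (Suc n) *\<^sub>R (F (z + s n *\<^sub>R e) - F z) - F' e) / norm e) \<longlonglongrightarrow> 0"
    by simp
  then have "(\<lambda>n. norm (real (Suc n) *\<^sub>R (F (z + s n *\<^sub>R e) - F z) - F' e)) \<longlonglongrightarrow> 0"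
    using tendsto_mult_right_zero[of _ sequentially "norm e"] False by simp
  then show ?thesis
    by (simp add: s_def tendsto_norm_zero_iff LIM_zero_iff)
qed

lemma difference_quotient_bound:
  fixes F :: "'a::real_normed_vector \<Rightarrow> 'b::real_inner"
  assumes dF: "\<And>w. (F has_derivative F' w) (at w)" and "0 < s"
    and B: "\<And>t. 0 \<le> t \<Longrightarrow> t \<le> s \<Longrightarrow> norm (F' (z + t *\<^sub>R e) e) \<le> B"
  shows "norm (F (z + s *\<^sub>R e) - F z) \<le> s * B"
proof -
  define g where "g t = F (z + t *\<^sub>R e)" for t
  have dg: "(g has_derivative (\<lambda>h. F' (z + t *\<^sub>R e) (h *\<^sub>R e))) (at t)" for t
  proof -
    have "((\<lambda>t. z + t *\<^sub>R e) has_derivative (\<lambda>h. h *\<^sub>R e)) (at t)"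
      by (auto intro!: derivative_eq_intros)
    from has_derivative_compose[OF this dF] show ?thesis
      by (simp add: g_def[abs_def] o_def)
  qed
  have contF: "continuous_on UNIV F"
    using dF by (meson continuous_at_imp_continuous_on has_derivative_continuous)
  have "continuous_on {0..s} g"
    unfolding g_def by (intro continuous_on_compose2[OF contF] continuous_intros) auto
  from mvt_general[OF \<open>0 < s\<close> this dg]
  obtain t where t: "t \<in> {0<..<s}"
    and mv: "norm (g s - g 0) \<le> norm (F' (z + t *\<^sub>R e) ((s - 0) *\<^sub>R e))"
    by blast
  have "F' (z + t *\<^sub>R e) (s *\<^sub>R e) = s *\<^sub>R F' (z + t *\<^sub>R e) e"
    by (rule linear_scale[OF has_derivative_linear[OF dF]])
  then have "norm (g s - g 0) \<le> s * norm (F' (z + t *\<^sub>R e) e)"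
    using mv \<open>0 < s\<close> by simp
  also have "\<dots> \<le> s * B"
    using B[of t] t \<open>0 < s\<close> by (intro mult_left_mono) auto
  finally show ?thesis by (simp add: g_def)
qed

text \<open>The integral is the limit, by dominated convergence, of the integrals of difference
  quotients, and these vanish by translation invariance.\<close>
lemma integral_directional_derivative_eq_0:
  fixes F :: "'a::euclidean_space \<Rightarrow> 'b::euclidean_space"
  assumes dF: "\<And>z. (F has_derivative F' z) (at z)"
    and cont: "continuous_on UNIV (\<lambda>z. F' z e)"
    and supp: "\<And>z. norm z \<ge> R \<Longrightarrow> F z = 0"
  shows "(LINT z|lborel. F' z e) = 0"
proof -
  have contF: "continuous_on UNIV F"
    using dF by (meson continuous_at_imp_continuous_on has_derivative_continuous)
  obtain B where B: "\<And>z. z \<in> cball 0 (R + 2 * norm e) \<Longrightarrow> norm (F' z e) \<le> B"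
    using compact_imp_bounded[OF compact_continuous_image[OF continuous_on_subset[OF cont]]]
    unfolding bounded_iff by (metis compact_cball image_eqI subset_UNIV)
  define q where "q n z = real (Suc n) *\<^sub>R (F (z + (1 / real (Suc n)) *\<^sub>R e) - F z)" for n z
  have short: "norm (t *\<^sub>R e) \<le> norm e" if "0 \<le> t" "t \<le> 1" for t
    using that by (simp add: mult_left_le_one_le)
  have far: "norm (z + (1 / real (Suc n)) *\<^sub>R e) \<ge> R" if "norm z > R + norm e" for n z
  proof -
    have "norm ((1 / real (Suc n)) *\<^sub>R e) \<le> norm e"
      using short[of "1 / real (Suc n)"] by simp
    then show ?thesis
      using norm_diff_ineq[of z "(1 / real (Suc n)) *\<^sub>R e"] that by linarith
  qed
  have integral_q: "integral\<^sup>L lborel (q n) = 0" for n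
    unfolding q_def[abs_def] by (rule integral_translate_diff_eq_0[OF contF supp])
  have q_bound: "norm (q n z) \<le> B * indicator (cball 0 (R + norm e)) z" for n z
  proof (cases "norm z \<le> R + norm e")
    case True
    have "norm (F' (z + t *\<^sub>R e) e) \<le> B" if "0 \<le> t" "t \<le> 1 / real (Suc n)" for t
    proof (rule B)
      have "t \<le> 1" using that order_trans[of t "1 / real (Suc n)" 1] by simp
      then show "z + t *\<^sub>R e \<in> cball 0 (R + 2 * norm e)"
        using norm_triangle_ineq[of z "t *\<^sub>R e"] True that short[of t]
        by auto
    qed
    from difference_quotient_bound[where s = "1 / real (Suc n)", OF dF _ this]
    have "norm (F (z + (1 / real (Suc n)) *\<^sub>R e) - F z) \<le> 1 / real (Suc n) * B"
      by simp
    then have "norm (q n z) \<le> real (Suc n) * (1 / real (Suc n) * B)"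
      unfolding q_def by (simp only: norm_scaleR abs_of_nat mult_left_mono of_nat_0_le_iff)
    then show ?thesis
      using True by simp
  next
    case False
    moreover have "R \<le> norm z"
      using False norm_ge_zero[of e] by linarith
    ultimately have "F z = 0" "F (z + (1 / real (Suc n)) *\<^sub>R e) = 0"
      using supp far[of z n] by auto
    then show ?thesis
      using False by (simp add: q_def indicator_def)
  qed
  have "(\<lambda>n. integral\<^sup>L lborel (q n)) \<longlonglongrightarrow> (LINT z|lborel. F' z e)"
  proof (rule integral_dominated_convergence[where w = "\<lambda>z. B * indicator (cball 0 (R + norm e)) z"])
    show "(\<lambda>z. F' z e) \<in> borel_measurable lborel"
      using cont by (simp add: borel_measurable_continuous_onI)
    show "q n \<in> borel_measurable lborel" for n
      unfolding q_def
      by (auto intro!: borel_measurable_continuous_onI continuous_intros continuous_on_compose2[OF contF])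
    show "integrable lborel (\<lambda>z. B * indicator (cball 0 (R + norm e)) z)"
      by (intro integrable_mult_right integrable_real_indicator)
         (auto simp: emeasure_bounded_finite[OF bounded_cball, simplified])
    show "AE z in lborel. (\<lambda>n. q n z) \<longlonglongrightarrow> F' z e"
      using difference_quotients_tendsto[OF dF] by (simp add: q_def)
    show "AE z in lborel. norm (q n z) \<le> B * indicator (cball 0 (R + norm e)) z" for n
      using q_bound by simp
  qed
  then show ?thesis
    using integral_q LIMSEQ_unique[OF _ tendsto_const] by simp
qed

definition plane_wave :: "'a::real_inner \<Rightarrow> 'a \<Rightarrow> complex" where
  "plane_wave W z = exp (\<i> * complex_of_real (W \<bullet> z))"

lemma has_derivative_plane_wave:
  "(plane_wave W has_derivative (\<lambda>h. plane_wave W z * (\<i> * complex_of_real (W \<bullet> h)))) (at z)"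
proof -
  have "((\<lambda>h. \<i> * complex_of_real (W \<bullet> h)) has_derivative (\<lambda>h. \<i> * complex_of_real (W \<bullet> h))) (at z)"
    by (intro bounded_linear_imp_has_derivative bounded_linear_compose[OF bounded_linear_mult_right]
        bounded_linear_compose[OF bounded_linear_of_real] bounded_linear_inner_right)
  from has_derivative_compose[OF this has_field_derivative_imp_has_derivative[OF DERIV_exp]]
  show ?thesis
    unfolding plane_wave_def[abs_def] by (simp add: o_def mult.commute)
qed

lemma continuous_on_plane_wave: "continuous_on S (plane_wave W)"
  unfolding plane_wave_def by (intro continuous_intros)

lemma norm_plane_wave [simp]: "norm (plane_wave W z) = 1"
  unfolding plane_wave_def by simp

lemma phase_eq_plane_wave: "phase x Y \<Xi> = plane_wave (\<chi> j. x - Y $ j) \<Xi>"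
proof -
  have "\<i> * complex_of_real ((\<chi> j. x - Y $ j) \<bullet> \<Xi>) = (\<Sum>j\<in>UNIV. \<i> * complex_of_real ((x - Y $ j) \<bullet> \<Xi> $ j))"
    unfolding inner_vec_def by (simp add: sum_distrib_left)
  then show ?thesis
    unfolding phase_def plane_wave_def by (simp add: exp_sum)
qed

lemma integral_partial_times_plane_wave:
  fixes g :: "'a::euclidean_space \<Rightarrow> complex"
  assumes g: "smooth_fun g" and supp: "\<And>z. norm z \<ge> R \<Longrightarrow> g z = 0" and e: "e \<in> Basis"
  shows "(LINT z|lborel. dderiv [e] g z * plane_wave W z)
       = - (\<i> * complex_of_real (W \<bullet> e)) * (LINT z|lborel. g z * plane_wave W z)"
proof -
  let ?F' = "\<lambda>z h. g z * (plane_wave W z * (\<i> * complex_of_real (W \<bullet> h)))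
                 + frechet_derivative g (at z) h * plane_wave W z"
  have dF: "((\<lambda>z. g z * plane_wave W z) has_derivative ?F' z) (at z)" for z
    using has_derivative_mult[OF smooth_fun_has_derivative[OF g, of "[]"] has_derivative_plane_wave]
    by simp
  have F'e: "?F' z e = dderiv [e] g z * plane_wave W z + (\<i> * complex_of_real (W \<bullet> e)) * (g z * plane_wave W z)" for z
    by (simp add: algebra_simps)
  have cont0: "continuous_on UNIV g" and cont1: "continuous_on UNIV (dderiv [e] g)"
    using smooth_fun_continuous_on[OF g, of "[]"] smooth_fun_continuous_on[OF g, of "[e]"] e by auto
  have "continuous_on UNIV (\<lambda>z. ?F' z e)"
    unfolding F'e using cont0 cont1 by (intro continuous_intros continuous_on_plane_wave)
  moreover have "g z * plane_wave W z = 0" if "norm z \<ge> R" for z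
    using supp that by simp
  ultimately have "(LINT z|lborel. ?F' z e) = 0"
    by (rule integral_directional_derivative_eq_0[OF dF])
  moreover have "integrable lborel (\<lambda>z. dderiv [e] g z * plane_wave W z)"
    using cont1 dderiv_eq_0_outside_ball[of R g, OF supp, of _ "[e]"]
    by (intro integrable_continuous_vanishing_outside_ball[of _ R])
       (auto intro!: continuous_intros continuous_on_plane_wave)
  moreover have "integrable lborel (\<lambda>z. g z * plane_wave W z)"
    using cont0 supp
    by (intro integrable_continuous_vanishing_outside_ball[of _ R])
       (auto intro!: continuous_intros continuous_on_plane_wave)
  ultimately show ?thesis
    unfolding F'e by (simp add: eq_neg_iff_add_eq_0)
qed

lemma integral_dderiv_times_plane_wave:
  fixes g :: "'a::euclidean_space \<Rightarrow> complex"
  assumes g: "smooth_fun g" and supp: "\<And>z. norm z \<ge> R \<Longrightarrow> g z = 0" and "ds \<in> lists Basis"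
  shows "(LINT z|lborel. dderiv ds g z * plane_wave W z)
       = (\<Prod>e\<leftarrow>ds. - (\<i> * complex_of_real (W \<bullet> e))) * (LINT z|lborel. g z * plane_wave W z)"
  using assms(3)
proof (induction ds)
  case (Cons e ds)
  have "dderiv (e # ds) g = dderiv [e] (dderiv ds g)"
    by (simp add: dderiv_append)
  moreover have "dderiv ds g z = 0" if "norm z \<ge> R + 1" for z
  proof (rule dderiv_eq_0_outside_ball[of R g, OF supp])
    show "R < norm z" using that by linarith
  qed
  ultimately have "(LINT z|lborel. dderiv (e # ds) g z * plane_wave W z)
     = - (\<i> * complex_of_real (W \<bullet> e)) * (LINT z|lborel. dderiv ds g z * plane_wave W z)"
    using integral_partial_times_plane_wave[OF smooth_fun_dderiv[OF g], of ds "R + 1" e W] Cons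
    by simp
  then show ?case
    using Cons by simp
qed simp

section \<open>Dyadic annuli and Littlewood-Paley pieces\<close>

lemma smooth_fun_dderiv_bounded:
  fixes f :: "'a::euclidean_space \<Rightarrow> 'b::real_normed_vector"
  assumes f: "smooth_fun f" and supp: "\<And>z. norm z \<ge> R \<Longrightarrow> f z = 0" and ds: "ds \<in> lists Basis"
  obtains B where "B \<ge> 0" "\<And>z. norm (dderiv ds f z) \<le> B"
proof -
  have "compact (dderiv ds f ` cball 0 (R + 1))"
    by (rule compact_continuous_image[OF smooth_fun_continuous_on[OF f ds]]) simp
  then have "bounded (dderiv ds f ` cball 0 (R + 1))"
    by (rule compact_imp_bounded)
  then obtain B where "\<forall>y \<in> dderiv ds f ` cball 0 (R + 1). norm y \<le> B"
    unfolding bounded_iff by blast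
  then have B: "\<And>z. z \<in> cball 0 (R + 1) \<Longrightarrow> norm (dderiv ds f z) \<le> B"
    by blast
  have "norm (dderiv ds f z) \<le> max B 0" for z
  proof (cases "norm z \<le> R + 1")
    case False
    have "dderiv ds f z = 0"
      using False by (intro dderiv_eq_0_outside_ball[of R f] supp) auto
    then show ?thesis by simp
  qed (use B[of z] in auto)
  then show ?thesis
    using that[of "max B 0"] by simp
qed

definition dyadic_annulus :: "nat \<Rightarrow> 'a::real_normed_vector set" where
  "dyadic_annulus k = {z. (if k = 0 then 0 else 2 ^ (k - 1)) \<le> norm z \<and> norm z \<le> 2 ^ (k + 1)}"

lemma dyadic_annulus_subset_cball: "dyadic_annulus k \<subseteq> cball 0 (2 ^ (k + 1))"
  unfolding dyadic_annulus_def by auto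

lemma closed_dyadic_annulus: "closed (dyadic_annulus k)"
  unfolding dyadic_annulus_def by (intro closed_Collect_conj closed_Collect_le continuous_intros)

lemma measure_dyadic_annulus_le:
  "measure lborel (dyadic_annulus k :: 'a::euclidean_space set)
     \<le> 4 ^ DIM('a) * 2 powr (real k * real DIM('a))"
proof -
  define r :: real where "r = 2 ^ (k + 1)"
  have r0: "r \<ge> 0" unfolding r_def by simp
  have "dyadic_annulus k \<subseteq> cbox (- r *\<^sub>R One) (r *\<^sub>R One :: 'a)"
  proof
    fix z :: 'a assume "z \<in> dyadic_annulus k"
    then have "norm z \<le> r" unfolding dyadic_annulus_def r_def by simp
    then have "- r \<le> z \<bullet> b \<and> z \<bullet> b \<le> r" if "b \<in> Basis" for b
      using Basis_le_norm[OF that, of z] abs_le_iff[of "z \<bullet> b" r] by linarith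
    then show "z \<in> cbox (- r *\<^sub>R One) (r *\<^sub>R One)"
      unfolding mem_box by auto
  qed
  then have "measure lborel (dyadic_annulus k :: 'a set) \<le> measure lborel (cbox (- r *\<^sub>R One) (r *\<^sub>R One :: 'a))"
    by (rule measure_mono_fmeasurable) (auto intro: borel_closed closed_dyadic_annulus fmeasurable_cbox)
  also have "\<dots> = (2 * r) ^ DIM('a)"
  proof -
    have "(\<Prod>b\<in>(Basis::'a set). (r *\<^sub>R One - (- r *\<^sub>R One)) \<bullet> b) = (2 * r) ^ DIM('a)"
      by (simp add: inner_diff_left inner_add_left prod_constant)
    moreover have "\<forall>b\<in>(Basis::'a set). (- r *\<^sub>R One) \<bullet> b \<le> (r *\<^sub>R One) \<bullet> b"
      using r0 by simp
    ultimately show ?thesis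
      unfolding measure_lborel_cbox_eq by presburger
  qed
  also have "(2 * r) ^ DIM('a) = 4 ^ DIM('a) * 2 powr (real k * real DIM('a))"
    by (simp add: r_def power_mult_distrib powr_realpow[symmetric] powr_powr
        power_mult[symmetric] of_nat_mult[symmetric] del: of_nat_mult)
  finally show ?thesis .
qed

context
  fixes \<phi>0 :: "'a::euclidean_space \<Rightarrow> real"
  assumes LP: "LP_generator \<phi>0"
begin

lemma LP_piece_eq:
  "LP_piece \<phi>0 k = (if k = 0 then \<phi>0 else (\<lambda>z. \<phi>0 ((1 / 2 ^ k) *\<^sub>R z) - \<phi>0 ((1 / 2 ^ (k - 1)) *\<^sub>R z)))"
  by (auto simp: LP_piece_def fun_eq_iff)

lemma LP_piece_smooth: "smooth_fun (LP_piece \<phi>0 k)"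
proof -
  have "smooth_fun \<phi>0" using LP unfolding LP_generator_def by simp
  then show ?thesis
    unfolding LP_piece_eq by (simp add: smooth_fun_diff smooth_fun_rescale)
qed

lemma dderiv_LP_piece_eq_0:
  assumes "z \<notin> dyadic_annulus k"
  shows "dderiv ds (LP_piece \<phi>0 k) z = 0"
proof (cases "norm z > 2 ^ (k + 1)")
  case True
  have vanish: "\<phi>0 ((1 / 2 ^ j) *\<^sub>R w) = 0" if "j \<le> k" "norm w \<ge> 2 ^ (k + 1)" for j w
  proof -
    have "(2::real) ^ j * 2 \<le> 2 ^ k * 2"
      using that(1) by simp
    moreover have "(2::real) ^ (k + 1) = 2 ^ k * 2"
      by simp
    ultimately have "norm w \<ge> 2 ^ j * 2"
      using that(2) by linarith
    then show ?thesis
      using LP unfolding LP_generator_def by (simp add: field_simps)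
  qed
  have "LP_piece \<phi>0 k w = 0" if "norm w \<ge> 2 ^ (k + 1)" for w
    using vanish[of k w] vanish[of "k - 1" w] that unfolding LP_piece_def by (cases "k = 0") simp_all
  then show ?thesis
    using True by (rule dderiv_eq_0_outside_ball)
next
  case False
  then have k: "k > 0" and z: "norm z < 2 ^ (k - 1)"
    using assms unfolding dyadic_annulus_def by (auto split: if_splits)
  have one: "\<phi>0 ((1 / 2 ^ j) *\<^sub>R w) = 1" if "k - 1 \<le> j" "norm w < 2 ^ (k - 1)" for j w
  proof -
    have "(2::real) ^ (k - 1) \<le> 2 ^ j" using that by (intro power_increasing) auto
    then have "norm w \<le> 2 ^ j" using that by linarith
    then show ?thesis
      using LP unfolding LP_generator_def by (simp add: field_simps)
  qed
  have inner_zero: "LP_piece \<phi>0 k w = 0" if "w \<in> {w. norm w < 2 ^ (k - 1)}" for w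
    using one[of k w] one[of "k - 1" w] that k unfolding LP_piece_def by simp
  show ?thesis
    by (intro dderiv_eq_0_open[of "{w. norm w < 2 ^ (k - 1)}"] inner_zero)
       (use z in \<open>auto intro: open_Collect_less continuous_intros\<close>)
qed

lemma LP_piece_dderiv_bound:
  assumes ds: "ds \<in> lists Basis"
  shows "\<exists>B\<ge>0. \<forall>k z. norm (dderiv ds (LP_piece \<phi>0 k) z)
            \<le> B * (1 / 2 ^ k) ^ length ds * indicator (dyadic_annulus k) z"
proof -
  have \<phi>0: "smooth_fun \<phi>0" "\<And>z. norm z \<ge> 2 \<Longrightarrow> \<phi>0 z = 0"
    using LP unfolding LP_generator_def by auto
  obtain B where B0: "B \<ge> 0" and B: "\<And>z. norm (dderiv ds \<phi>0 z) \<le> B"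
    using smooth_fun_dderiv_bounded[OF \<phi>0 ds] by blast
  define L where "L = length ds"
  have bound: "norm (dderiv ds (LP_piece \<phi>0 k) z) \<le> (1 + 2 ^ L) * B * (1 / 2 ^ k) ^ L" for k z
  proof (cases "k = 0")
    case True
    then show ?thesis
      using B[of z] B0 mult_right_mono[of 1 "1 + 2 ^ L" B] by (simp add: LP_piece_eq)
  next
    case False
    define c :: real where "c = 1 / 2 ^ k"
    have c2: "1 / 2 ^ (k - Suc 0) = 2 * c"
      using False by (cases k) (auto simp: c_def)
    have "dderiv ds (LP_piece \<phi>0 k) z
        = c ^ L *\<^sub>R dderiv ds \<phi>0 (c *\<^sub>R z) - (2 * c) ^ L *\<^sub>R dderiv ds \<phi>0 ((2 * c) *\<^sub>R z)"
      using False
      by (simp add: LP_piece_eq dderiv_diff[OF smooth_fun_rescale smooth_fun_rescale ds] \<phi>0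
          dderiv_rescale[OF \<phi>0(1) ds] L_def c_def[symmetric] c2)
    also have "norm \<dots> \<le> c ^ L * B + (2 * c) ^ L * B"
    proof (rule order_trans[OF norm_triangle_ineq4 add_mono])
      have c0: "c \<ge> 0" by (simp add: c_def)
      have scaled: "norm (a *\<^sub>R dderiv ds \<phi>0 w) \<le> a * B" if "a \<ge> 0" for a w
        using mult_left_mono[OF B[of w] that] that by (simp add: abs_mult)
      show "norm (c ^ L *\<^sub>R dderiv ds \<phi>0 (c *\<^sub>R z)) \<le> c ^ L * B"
        by (rule scaled) (use c0 in simp)
      show "norm ((2 * c) ^ L *\<^sub>R dderiv ds \<phi>0 ((2 * c) *\<^sub>R z)) \<le> (2 * c) ^ L * B"
        by (rule scaled) (use c0 in simp)
    qed
    also have "\<dots> = (1 + 2 ^ L) * B * c ^ L"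
      by (simp add: power_mult_distrib algebra_simps)
    finally show ?thesis
      unfolding c_def .
  qed
  show ?thesis
  proof (intro exI conjI allI)
    show "(1 + 2 ^ L) * B \<ge> 0"
      using B0 by simp
    fix k z
    show "norm (dderiv ds (LP_piece \<phi>0 k) z) \<le> (1 + 2 ^ L) * B * (1 / 2 ^ k) ^ length ds * indicator (dyadic_annulus k) z"
      using bound[of k z] dderiv_LP_piece_eq_0[of z k ds] by (cases "z \<in> dyadic_annulus k") (simp_all add: L_def)
  qed
qed

end

section \<open>Symbol estimates on dyadic pieces\<close>

lemma jbr_pos: "jbr z > 0"
  unfolding jbr_def by (simp add: add_pos_nonneg)

lemma jbr_ge_1: "jbr z \<ge> 1"
  unfolding jbr_def by simp

lemma norm_le_jbr: "norm z \<le> jbr z"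
  unfolding jbr_def by (simp add: real_le_rsqrt)

lemma jbr_le_1_plus_norm: "jbr z \<le> 1 + norm z"
proof -
  have "1 + (norm z)\<^sup>2 \<le> (1 + norm z)\<^sup>2" by (simp add: power2_eq_square algebra_simps)
  then show ?thesis unfolding jbr_def by (simp add: real_sqrt_le_iff real_sqrt_le_mono[THEN order_trans])
qed

lemma continuous_on_jbr_powr: "continuous_on S (\<lambda>z. jbr z powr s)"
proof -
  have "continuous_on S jbr"
    unfolding jbr_def[abs_def] by (intro continuous_intros)
  moreover have "\<forall>z\<in>S. jbr z \<noteq> 0"
    by (metis jbr_pos less_irrefl)
  ultimately show ?thesis
    by (intro continuous_on_powr continuous_intros)
qed

lemma jbr_powr_dyadic_annulus_le:
  assumes "z \<in> dyadic_annulus k"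
  shows "jbr z powr s \<le> 4 powr \<bar>s\<bar> * 2 powr (real k * s)"
proof -
  have two_pow: "((2::real) ^ k) powr s = 2 powr (real k * s)"
    by (simp add: powr_realpow[symmetric] powr_powr)
  show ?thesis
  proof (cases "s \<ge> 0")
    case True
    have "norm z \<le> 2 * 2 ^ k"
      using assms unfolding dyadic_annulus_def by simp
    then have "jbr z \<le> 4 * 2 ^ k"
      using jbr_le_1_plus_norm[of z] one_le_power[of "2::real" k] by linarith
    then have "jbr z powr s \<le> (4 * 2 ^ k) powr s"
      using True jbr_pos[of z] by (intro powr_mono2) auto
    then show ?thesis
      using True by (simp add: powr_mult two_pow)
  next
    case False
    have "2 ^ k / 2 \<le> jbr z"
    proof (cases "k = 0")
      case False
      then have "(2::real) ^ k / 2 = 2 ^ (k - 1)" by (cases k) auto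
      then show ?thesis using assms False norm_le_jbr[of z] unfolding dyadic_annulus_def by auto
    qed (use jbr_ge_1[of z] in simp)
    then have "jbr z powr s \<le> (2 ^ k / 2) powr s"
      using False by (intro powr_mono2') auto
    also have "\<dots> = 2 powr (- s) * 2 powr (real k * s)"
      by (simp add: powr_divide two_pow powr_minus_divide)
    also have "\<dots> \<le> 4 powr (- s) * 2 powr (real k * s)"
      using False by (intro mult_right_mono powr_mono2) auto
    finally show ?thesis using False by simp
  qed
qed

definition symbol_bounded ::
    "real \<Rightarrow> real \<Rightarrow> ('a::euclidean_space list \<Rightarrow> real) \<Rightarrow> ('a \<Rightarrow> complex) \<Rightarrow> bool" where
  "symbol_bounded m \<rho> C f \<longleftrightarrow> smooth_fun f \<and>
     (\<forall>ds \<in> lists Basis. \<forall>\<Xi>. norm (dderiv ds f \<Xi>) \<le> C ds * jbr \<Xi> powr (m - \<rho> * real (length ds)))"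

lemma closed_superset_of_dense_eq_UNIV:
  assumes "closed S" "D \<subseteq> S" "\<And>X. open X \<Longrightarrow> X \<noteq> {} \<Longrightarrow> \<exists>d\<in>D. d \<in> X"
  shows "S = UNIV"
proof (rule ccontr)
  assume "S \<noteq> UNIV"
  then have "open (- S)" "- S \<noteq> {}" using assms(1) by auto
  then show False using assms(2,3) by blast
qed

text \<open>For each \<open>\<Xi>\<close> the estimates hold off a null set of \<open>x\<close> that depends on \<open>\<Xi>\<close>. Over a countable
  dense set of \<open>\<Xi>\<close> these null sets have a null union, and continuity in \<open>\<Xi>\<close> does the rest.\<close>
lemma LinfS_AE_symbol_bounded:
  fixes a :: "real^'n \<Rightarrow> (real^'n)^'N \<Rightarrow> complex"
  assumes "LinfS m \<rho> a"
  obtains C where "AE x in lborel. symbol_bounded m \<rho> C (a x)"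
proof -
  have smooth: "AE x in lborel. smooth_fun (a x)"
    and "\<forall>ds \<in> lists Basis. \<exists>C. \<forall>\<Xi>. AE x in lborel.
           norm (dderiv ds (a x) \<Xi>) \<le> C * jbr \<Xi> powr (m - \<rho> * real (length ds))"
    using assms unfolding LinfS_def by auto
  then obtain C where C: "\<forall>ds \<in> lists Basis. \<forall>\<Xi>. AE x in lborel.
           norm (dderiv ds (a x) \<Xi>) \<le> C ds * jbr \<Xi> powr (m - \<rho> * real (length ds))"
    by metis
  obtain D :: "((real^'n)^'N) set" where D: "countable D" "\<And>X. open X \<Longrightarrow> X \<noteq> {} \<Longrightarrow> \<exists>d\<in>D. d \<in> X"
    using countable_dense_setE by blast
  have "countable (lists (Basis :: ((real^'n)^'N) set))"
    by (intro countable_lists countable_finite finite_Basis)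
  then have on_D: "AE x in lborel. \<forall>ds \<in> lists Basis. \<forall>\<Xi>\<in>D.
               norm (dderiv ds (a x) \<Xi>) \<le> C ds * jbr \<Xi> powr (m - \<rho> * real (length ds))"
    using C by (simp add: AE_ball_countable AE_ball_countable[OF D(1)])
  have "AE x in lborel. symbol_bounded m \<rho> C (a x)"
    using smooth on_D
  proof eventually_elim
    case (elim x)
    have "\<forall>\<Xi>. norm (dderiv ds (a x) \<Xi>) \<le> C ds * jbr \<Xi> powr (m - \<rho> * real (length ds))"
      if ds: "ds \<in> lists Basis" for ds
    proof -
      let ?S = "{\<Xi>. norm (dderiv ds (a x) \<Xi>) \<le> C ds * jbr \<Xi> powr (m - \<rho> * real (length ds))}"
      have "closed ?S"
        by (intro closed_Collect_le continuous_intros continuous_on_jbr_powr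
            smooth_fun_continuous_on[OF elim(1) ds])
      moreover have "D \<subseteq> ?S" using elim(2) ds by auto
      ultimately have "?S = UNIV" using D(2) by (rule closed_superset_of_dense_eq_UNIV)
      then show ?thesis by auto
    qed
    then show ?case using elim(1) unfolding symbol_bounded_def by auto
  qed
  then show ?thesis by (rule that)
qed

lemma symbol_times_dyadic_le:
  fixes p q k :: nat and m \<rho> :: real
  assumes u: "0 \<le> u" "u \<le> c * jbr z powr (m - \<rho> * p)"
    and v: "0 \<le> v" "v \<le> B * (1 / 2 ^ k) ^ q * indicator (dyadic_annulus k) z"
    and \<rho>: "0 \<le> \<rho>" "\<rho> \<le> 1"
  shows "u * v \<le> \<bar>c\<bar> * B * 4 powr \<bar>m - \<rho> * p\<bar> * 2 powr (real k * (m - \<rho> * (p + q)))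
                  * indicator (dyadic_annulus k) z"
proof (cases "z \<in> dyadic_annulus k")
  case True
  let ?s = "m - \<rho> * p"
  have "0 \<le> B * (1 / 2 ^ k) ^ q"
    using v True by simp
  moreover have "(0::real) < (1 / 2 ^ k) ^ q"
    by simp
  ultimately have B: "B \<ge> 0"
    by (simp add: zero_le_mult_iff)
  have "(1 / 2 ^ k) ^ q = (2::real) powr (- (real k * real q))"
    by (simp add: power_one_over powr_minus_divide powr_realpow[symmetric] powr_powr)
  also have "\<dots> \<le> 2 powr (- (real k * \<rho> * real q))"
    using \<rho> by (intro powr_mono) (auto intro!: mult_right_mono mult_left_le)
  finally have v': "v \<le> B * 2 powr (- (real k * \<rho> * real q))"
    using mult_left_mono[OF _ B] v(2) True by (simp add: order_trans)
  have u': "u \<le> \<bar>c\<bar> * (4 powr \<bar>?s\<bar> * 2 powr (real k * ?s))"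
    using u(2) mult_left_mono[OF jbr_powr_dyadic_annulus_le[OF True, of ?s] abs_ge_zero[of c]]
      mult_right_mono[OF abs_ge_self[of c] powr_ge_zero[of "jbr z" ?s]]
    by linarith
  have "u * v \<le> (\<bar>c\<bar> * (4 powr \<bar>?s\<bar> * 2 powr (real k * ?s))) * (B * 2 powr (- (real k * \<rho> * real q)))"
    using u' v' u(1) v(1) by (intro mult_mono) auto
  also have "\<dots> = \<bar>c\<bar> * B * 4 powr \<bar>?s\<bar> * 2 powr (real k * ?s - real k * \<rho> * real q)"
    by (simp add: powr_diff powr_minus_divide)
  also have "real k * ?s - real k * \<rho> * real q = real k * (m - \<rho> * (p + q))"
    by (simp add: algebra_simps)
  finally show ?thesis
    using True by simp
next
  case False
  then show ?thesis using u(1) v by simp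
qed

lemma norm_sum_list_le: "norm (\<Sum>x\<leftarrow>xs. f x) \<le> (\<Sum>x\<leftarrow>xs. norm (f x))"
  by (induction xs) (auto intro: order_trans[OF norm_triangle_ineq])

lemma norm_dderiv_symbol_times_dderiv_LP_piece_le:
  fixes f :: "'a::euclidean_space \<Rightarrow> complex" and \<phi>0 :: "'a \<Rightarrow> real"
  assumes LP: "LP_generator \<phi>0" and \<rho>: "0 \<le> \<rho>" "\<rho> \<le> 1" and f: "symbol_bounded m \<rho> C f"
    and p: "p \<in> lists Basis" and q: "q \<in> lists Basis"
    and B: "norm (dderiv q (LP_piece \<phi>0 k) z) \<le> B * (1 / 2 ^ k) ^ length q * indicator (dyadic_annulus k) z"
  shows "norm (dderiv p f z * dderiv q (\<lambda>z. complex_of_real (LP_piece \<phi>0 k z)) z)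
     \<le> \<bar>C p\<bar> * B * 4 powr \<bar>m - \<rho> * length p\<bar> * 2 powr (real k * (m - \<rho> * (length p + length q)))
         * indicator (dyadic_annulus k) z"
proof -
  have "dderiv q (\<lambda>z. complex_of_real (LP_piece \<phi>0 k z)) z = complex_of_real (dderiv q (LP_piece \<phi>0 k) z)"
    by (rule fun_cong[OF dderiv_linear[OF bounded_linear_of_real LP_piece_smooth[OF LP] q]])
  moreover have "norm (dderiv p f z) \<le> C p * jbr z powr (m - \<rho> * length p)"
    using f p unfolding symbol_bounded_def by blast
  ultimately show ?thesis
    using symbol_times_dyadic_le[OF norm_ge_zero _ norm_ge_zero B \<rho>] by (simp add: norm_mult)
qed

lemma symbol_times_LP_piece_dderiv_bound:
  fixes C :: "'a::euclidean_space list \<Rightarrow> real" and \<phi>0 :: "'a \<Rightarrow> real"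
  assumes LP: "LP_generator \<phi>0" and \<rho>: "0 \<le> \<rho>" "\<rho> \<le> 1" and ds: "ds \<in> lists Basis"
  obtains E where "E \<ge> 0" "\<And>f k z. symbol_bounded m \<rho> C f \<Longrightarrow>
      norm (dderiv ds (\<lambda>z. f z * complex_of_real (LP_piece \<phi>0 k z)) z)
        \<le> E * 2 powr (real k * (m - \<rho> * real (length ds))) * indicator (dyadic_annulus k) z"
proof -
  have "\<forall>q \<in> lists Basis. \<exists>B\<ge>0. \<forall>k z. norm (dderiv q (LP_piece \<phi>0 k) z)
                        \<le> B * (1 / 2 ^ k) ^ length q * indicator (dyadic_annulus k) z"
    using LP_piece_dderiv_bound[OF LP] by blast
  from bchoice[OF this] obtain Bq where Bq: "\<forall>q \<in> lists Basis. Bq q \<ge> 0 \<and> (\<forall>k z. norm (dderiv q (LP_piece \<phi>0 k) z)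
                        \<le> Bq q * (1 / 2 ^ k) ^ length q * indicator (dyadic_annulus k) z)"
    by blast
  have parts: "fst pq \<in> lists Basis" "snd pq \<in> lists Basis"
    "length (fst pq) + length (snd pq) = length ds" if "pq \<in> set (bipartitions ds)" for pq
    using bipartitions_length_set[of "fst pq" "snd pq" ds] that ds by auto
  define E where "E = (\<Sum>pq\<leftarrow>bipartitions ds. \<bar>C (fst pq)\<bar> * Bq (snd pq) * 4 powr \<bar>m - \<rho> * length (fst pq)\<bar>)"
  show ?thesis
  proof (rule that)
    show "E \<ge> 0"
      unfolding E_def using Bq parts by (intro sum_list_nonneg) auto
    fix f k and z :: 'a
    assume f: "symbol_bounded m \<rho> C f"
    let ?T = "2 powr (real k * (m - \<rho> * real (length ds))) * indicator (dyadic_annulus k) z"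
    let ?\<phi> = "\<lambda>z. complex_of_real (LP_piece \<phi>0 k z)"
    have f_smooth: "smooth_fun f" and \<phi>_smooth: "smooth_fun ?\<phi>"
      using f smooth_fun_linear[OF bounded_linear_of_real LP_piece_smooth[OF LP]]
      unfolding symbol_bounded_def by blast+
    have "norm (dderiv ds (\<lambda>z. f z * ?\<phi> z) z)
        \<le> (\<Sum>pq\<leftarrow>bipartitions ds. norm (dderiv (fst pq) f z * dderiv (snd pq) ?\<phi> z))"
      unfolding dderiv_mult[OF f_smooth \<phi>_smooth ds] by (rule norm_sum_list_le)
    also have "\<dots> \<le> (\<Sum>pq\<leftarrow>bipartitions ds. (\<bar>C (fst pq)\<bar> * Bq (snd pq) * 4 powr \<bar>m - \<rho> * length (fst pq)\<bar>) * ?T)"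
    proof (rule sum_list_mono)
      fix pq assume pq: "pq \<in> set (bipartitions ds)"
      have "norm (dderiv (snd pq) (LP_piece \<phi>0 k) z)
          \<le> Bq (snd pq) * (1 / 2 ^ k) ^ length (snd pq) * indicator (dyadic_annulus k) z"
        using Bq parts(2)[OF pq] by blast
      from norm_dderiv_symbol_times_dderiv_LP_piece_le[OF LP \<rho> f parts(1,2)[OF pq] this]
      show "norm (dderiv (fst pq) f z * dderiv (snd pq) ?\<phi> z)
          \<le> (\<bar>C (fst pq)\<bar> * Bq (snd pq) * 4 powr \<bar>m - \<rho> * length (fst pq)\<bar>) * ?T"
        by (simp only: mult.assoc of_nat_add[symmetric] parts(3)[OF pq])
    qed
    also have "\<dots> = E * ?T"
      unfolding E_def by (rule sum_list_mult_const)
    finally show "norm (dderiv ds (\<lambda>z. f z * ?\<phi> z) z) \<le> E * 2 powr (real k * (m - \<rho> * real (length ds)))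
        * indicator (dyadic_annulus k) z"
      by (simp add: mult.assoc)
  qed
qed

lemma norm_integral_dyadic_annulus_le:
  fixes h :: "'a::euclidean_space \<Rightarrow> 'b::{banach, second_countable_topology}"
  assumes "integrable lborel h" "\<And>z. norm (h z) \<le> B * indicator (dyadic_annulus k) z" "B \<ge> 0"
  shows "norm (integral\<^sup>L lborel h) \<le> B * 4 ^ DIM('a) * 2 powr (real k * real DIM('a))"
proof -
  have "integrable lborel (\<lambda>z::'a. B * indicator (dyadic_annulus k) z)"
    by (intro integrable_mult_right integrable_real_indicator)
       (auto intro: borel_closed closed_dyadic_annulus
         emeasure_bounded_finite[OF bounded_subset[OF bounded_cball dyadic_annulus_subset_cball], simplified])
  then have "norm (integral\<^sup>L lborel h) \<le> integral\<^sup>L lborel (\<lambda>z::'a. B * indicator (dyadic_annulus k) z)"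
    using assms by (intro order_trans[OF integral_norm_bound] integral_mono integrable_norm)
  also have "\<dots> = B * measure lborel (dyadic_annulus k :: 'a set)"
    by simp
  also have "\<dots> \<le> B * (4 ^ DIM('a) * 2 powr (real k * real DIM('a)))"
    using assms(3) by (intro mult_left_mono measure_dyadic_annulus_le)
  finally show ?thesis
    by (simp add: mult.assoc)
qed

lemma symbol_LP_integral_decay:
  fixes C :: "'a::euclidean_space list \<Rightarrow> real" and \<phi>0 :: "'a \<Rightarrow> real"
  assumes LP: "LP_generator \<phi>0" and \<rho>: "0 \<le> \<rho>" "\<rho> \<le> 1" and ds: "ds \<in> lists Basis"
  obtains E where "E \<ge> 0" "\<And>f k W. symbol_bounded m \<rho> C f \<Longrightarrow>
      \<bar>\<Prod>e\<leftarrow>ds. W \<bullet> e\<bar> * norm (LINT z|lborel. f z * complex_of_real (LP_piece \<phi>0 k z) * plane_wave W z)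
        \<le> E * 2 powr (real k * (m - \<rho> * real (length ds) + real DIM('a)))"
proof -
  obtain E where E0: "E \<ge> 0" and E: "\<And>f k z. symbol_bounded m \<rho> C f \<Longrightarrow>
      norm (dderiv ds (\<lambda>z. f z * complex_of_real (LP_piece \<phi>0 k z)) z)
        \<le> E * 2 powr (real k * (m - \<rho> * real (length ds))) * indicator (dyadic_annulus k) z"
    using symbol_times_LP_piece_dderiv_bound[OF LP \<rho> ds] by blast
  show ?thesis
  proof (rule that[of "E * 4 ^ DIM('a)"])
    show "E * 4 ^ DIM('a) \<ge> 0"
      using E0 by simp
    fix f k W assume f: "symbol_bounded m \<rho> C f"
    define g where "g = (\<lambda>z. f z * complex_of_real (LP_piece \<phi>0 k z))"
    let ?T = "2 powr (real k * (m - \<rho> * real (length ds)))"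
    let ?h = "\<lambda>z. dderiv ds g z * plane_wave W z"
    have g_smooth: "smooth_fun g"
      using f unfolding symbol_bounded_def g_def
      by (intro smooth_fun_mult smooth_fun_linear[OF bounded_linear_of_real] LP_piece_smooth[OF LP]) auto
    have g_supp: "g z = 0" if "norm z \<ge> 2 ^ (k + 1) + 1" for z
    proof -
      have "z \<notin> dyadic_annulus k"
        using that unfolding dyadic_annulus_def by auto
      then show ?thesis
        using dderiv_LP_piece_eq_0[OF LP, of z k "[]"] by (simp add: g_def)
    qed
    have h_bound: "norm (?h z) \<le> E * ?T * indicator (dyadic_annulus k) z" for z
      using E[OF f, of k z] by (simp add: g_def norm_mult)
    have "integrable lborel ?h"
    proof (rule integrable_continuous_vanishing_outside_ball)
      show "continuous_on UNIV ?h"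
        by (intro continuous_intros continuous_on_plane_wave smooth_fun_continuous_on[OF g_smooth ds])
      show "?h z = 0" if "norm z > 2 ^ (k + 1)" for z
        using h_bound[of z] that unfolding dyadic_annulus_def by simp
    qed
    from norm_integral_dyadic_annulus_le[OF this h_bound]
    have "norm (integral\<^sup>L lborel ?h) \<le> E * ?T * 4 ^ DIM('a) * 2 powr (real k * real DIM('a))"
      using E0 by simp
    also have "\<dots> = E * 4 ^ DIM('a) * 2 powr (real k * (m - \<rho> * real (length ds) + real DIM('a)))"
      by (simp add: powr_add[symmetric] algebra_simps)
    finally have "norm (integral\<^sup>L lborel ?h)
        \<le> E * 4 ^ DIM('a) * 2 powr (real k * (m - \<rho> * real (length ds) + real DIM('a)))" .
    moreover have "norm (\<Prod>e\<leftarrow>ds. - (\<i> * complex_of_real (W \<bullet> e))) = \<bar>\<Prod>e\<leftarrow>ds. W \<bullet> e\<bar>"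
      by (induction ds) (simp_all add: norm_mult abs_mult)
    ultimately show "\<bar>\<Prod>e\<leftarrow>ds. W \<bullet> e\<bar> * norm (LINT z|lborel. f z * complex_of_real (LP_piece \<phi>0 k z) * plane_wave W z)
        \<le> E * 4 ^ DIM('a) * 2 powr (real k * (m - \<rho> * real (length ds) + real DIM('a)))"
      using integral_dderiv_times_plane_wave[OF g_smooth g_supp ds, where W = W]
      by (simp add: g_def norm_mult)
  qed
qed

lemma symbol_LP_integral_decay_uniform:
  fixes C :: "'a::euclidean_space list \<Rightarrow> real" and \<phi>0 :: "'a \<Rightarrow> real"
  assumes LP: "LP_generator \<phi>0" and \<rho>: "0 \<le> \<rho>" "\<rho> \<le> 1"
  obtains E where "E \<ge> 0" "\<And>ds f k W. ds \<in> lists Basis \<Longrightarrow> length ds \<le> L \<Longrightarrow> symbol_bounded m \<rho> C f \<Longrightarrow>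
      \<bar>\<Prod>e\<leftarrow>ds. W \<bullet> e\<bar> * norm (LINT z|lborel. f z * complex_of_real (LP_piece \<phi>0 k z) * plane_wave W z)
        \<le> E * 2 powr (real k * (m - \<rho> * real (length ds) + real DIM('a)))"
proof -
  define D where "D = {ds. set ds \<subseteq> (Basis :: 'a set) \<and> length ds \<le> L}"
  have "finite D"
    unfolding D_def by (rule finite_lists_length_le[OF finite_Basis])
  have "\<forall>ds\<in>D. \<exists>E\<ge>0. \<forall>f k (W::'a). symbol_bounded m \<rho> C f \<longrightarrow>
      \<bar>\<Prod>e\<leftarrow>ds. W \<bullet> e\<bar> * norm (LINT z|lborel. f z * complex_of_real (LP_piece \<phi>0 k z) * plane_wave W z)
        \<le> E * 2 powr (real k * (m - \<rho> * real (length ds) + real DIM('a)))"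
  proof
    fix ds assume "ds \<in> D"
    then have "ds \<in> lists Basis" by (auto simp: D_def)
    show "\<exists>E\<ge>0. \<forall>f k W. symbol_bounded m \<rho> C f \<longrightarrow>
      \<bar>\<Prod>e\<leftarrow>ds. W \<bullet> e\<bar> * norm (LINT z|lborel. f z * complex_of_real (LP_piece \<phi>0 k z) * plane_wave W z)
        \<le> E * 2 powr (real k * (m - \<rho> * real (length ds) + real DIM('a)))"
      by (rule symbol_LP_integral_decay[OF LP \<rho> \<open>ds \<in> lists Basis\<close>]) blast
  qed
  from bchoice[OF this] obtain Eds where Eds: "\<forall>ds\<in>D. Eds ds \<ge> 0 \<and> (\<forall>f k (W::'a). symbol_bounded m \<rho> C f \<longrightarrow>
      \<bar>\<Prod>e\<leftarrow>ds. W \<bullet> e\<bar> * norm (LINT z|lborel. f z * complex_of_real (LP_piece \<phi>0 k z) * plane_wave W z)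
        \<le> Eds ds * 2 powr (real k * (m - \<rho> * real (length ds) + real DIM('a))))"
    by blast
  show ?thesis
  proof (rule that[of "\<Sum>ds\<in>D. Eds ds"])
    show "0 \<le> (\<Sum>ds\<in>D. Eds ds)"
      using Eds by (intro sum_nonneg) auto
    fix ds :: "'a list" and f k and W :: 'a
    assume "ds \<in> lists Basis" "length ds \<le> L" and f: "symbol_bounded m \<rho> C f"
    then have ds: "ds \<in> D" by (auto simp: D_def)
    have "Eds ds \<le> (\<Sum>ds\<in>D. Eds ds)"
      using Eds ds \<open>finite D\<close> by (intro member_le_sum) auto
    then show "\<bar>\<Prod>e\<leftarrow>ds. W \<bullet> e\<bar> * norm (LINT z|lborel. f z * complex_of_real (LP_piece \<phi>0 k z) * plane_wave W z)
        \<le> (\<Sum>ds\<in>D. Eds ds) * 2 powr (real k * (m - \<rho> * real (length ds) + real DIM('a)))"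
      using Eds ds f by (meson mult_right_mono order_trans powr_ge_zero)
  qed
qed

section \<open>Decay of the oscillatory integral\<close>

lemma exists_component_norm_le:
  fixes v :: "real^'n"
  obtains i where "norm v \<le> real CARD('n) * \<bar>v $ i\<bar>"
proof -
  have "Max (range (\<lambda>j. \<bar>v $ j\<bar>)) \<in> range (\<lambda>j. \<bar>v $ j\<bar>)"
    by (rule Max_in) simp_all
  then obtain i where "\<bar>v $ i\<bar> = Max (range (\<lambda>j. \<bar>v $ j\<bar>))"
    by (metis imageE)
  then have i: "\<bar>v $ j\<bar> \<le> \<bar>v $ i\<bar>" for j
    by simp
  have "norm v \<le> (\<Sum>j\<in>UNIV. \<bar>v $ j\<bar>)"
    by (rule norm_le_l1_cart)
  also have "\<dots> \<le> (\<Sum>j\<in>(UNIV::'n set). \<bar>v $ i\<bar>)"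
    using i by (intro sum_mono) auto
  finally show ?thesis
    using that by simp
qed

text \<open>For each block \<open>j\<close> the list repeats the basis vector at a largest coordinate of
  \<open>W $ j\<close>; that coordinate is at least \<open>norm (W $ j) / CARD('n)\<close> in absolute value.\<close>
lemma exists_Basis_list_prod_inner_ge:
  fixes W :: "(real^'n)^'N" and M :: "'N \<Rightarrow> nat" and S :: "'N set"
  obtains ds where "ds \<in> lists Basis" "length ds = sum M S"
    "(\<Prod>j\<in>S. norm (W $ j) ^ M j) \<le> real CARD('n) ^ sum M S * \<bar>\<Prod>e\<leftarrow>ds. W \<bullet> e\<bar>"
proof -
  have "\<forall>j. \<exists>i. norm (W $ j) \<le> real CARD('n) * \<bar>W $ j $ i\<bar>"
    using exists_component_norm_le by metis
  then obtain i where i: "\<And>j. norm (W $ j) \<le> real CARD('n) * \<bar>W $ j $ i j\<bar>"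
    by metis
  define e where "e j = (axis j (axis (i j) 1) :: (real^'n)^'N)" for j
  have e_Basis: "e j \<in> Basis" and W_e: "W \<bullet> e j = W $ j $ i j" for j
    unfolding e_def by (simp_all add: axis_in_Basis_iff inner_axis)
  obtain xs where xs: "set xs = S" "distinct xs"
    using finite_distinct_list[of S] by auto
  define ds where "ds = concat (map (\<lambda>j. replicate (M j) (e j)) xs)"
  show ?thesis
  proof (rule that)
    show "ds \<in> lists Basis"
      unfolding ds_def using e_Basis by auto
    show "length ds = sum M S"
      unfolding ds_def using xs by (simp add: length_concat o_def sum_list_distinct_conv_sum_set)
    have "(\<Prod>e\<leftarrow>ds. W \<bullet> e) = (\<Prod>j\<leftarrow>xs. (W $ j $ i j) ^ M j)"
      unfolding ds_def by (induction xs) (simp_all add: W_e)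
    also have "\<dots> = (\<Prod>j\<in>S. (W $ j $ i j) ^ M j)"
      using prod.distinct_set_conv_list[OF xs(2), of "\<lambda>j. (W $ j $ i j) ^ M j"] xs(1) by simp
    finally have "real CARD('n) ^ sum M S * \<bar>\<Prod>e\<leftarrow>ds. W \<bullet> e\<bar> = (\<Prod>j\<in>S. (real CARD('n) * \<bar>W $ j $ i j\<bar>) ^ M j)"
      by (simp add: abs_prod power_abs power_mult_distrib prod.distrib power_sum)
    moreover have "(\<Prod>j\<in>S. norm (W $ j) ^ M j) \<le> (\<Prod>j\<in>S. (real CARD('n) * \<bar>W $ j $ i j\<bar>) ^ M j)"
      using i by (intro prod_mono power_mono conjI) auto
    ultimately show "(\<Prod>j\<in>S. norm (W $ j) ^ M j) \<le> real CARD('n) ^ sum M S * \<bar>\<Prod>e\<leftarrow>ds. W \<bullet> e\<bar>"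
      by simp
  qed
qed

lemma exists_decay_order:
  fixes m \<rho> d :: real
  assumes "\<rho> > 0 \<or> (\<rho> = 0 \<and> m < - d)"
  obtains M0 :: nat where "m + d - \<rho> * real M0 < 0"
proof (cases "\<rho> > 0")
  case True
  obtain M0 :: nat where "(m + d) / \<rho> < real M0"
    using reals_Archimedean2 by blast
  then show ?thesis
    using True that[of M0] by (simp add: field_simps)
next
  case False
  then show ?thesis
    using assms that[of 0] by simp
qed

lemma prod_powr_le_prod_power:
  fixes v a :: "'i \<Rightarrow> real"
  assumes "\<And>j. j \<in> S \<Longrightarrow> 1 \<le> v j" "\<And>j. j \<in> S \<Longrightarrow> a j \<le> real (M j)"
  shows "(\<Prod>j\<in>S. v j powr a j) \<le> (\<Prod>j\<in>S. v j ^ M j)"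
proof (rule prod_mono)
  fix j assume j: "j \<in> S"
  have "v j powr a j \<le> v j powr real (M j)"
    using assms j by (intro powr_mono) auto
  also have "\<dots> = v j ^ M j"
    using assms(1)[OF j] by (simp add: powr_realpow)
  finally show "0 \<le> v j powr a j \<and> v j powr a j \<le> v j ^ M j"
    by simp
qed

lemma summable_geometric_bound:
  fixes f :: "nat \<Rightarrow> 'a::banach"
  assumes f: "\<And>k. norm (f k) \<le> A * r ^ k" and r: "0 \<le> r" "r < 1"
  shows "summable f \<and> norm (suminf f) \<le> A / (1 - r)"
proof
  have g: "summable (\<lambda>k. A * r ^ k)"
    using r by (intro summable_mult summable_geometric) auto
  then show "summable f"
    using f by (rule summable_comparison_test')
  have "norm (suminf f) \<le> (\<Sum>k. A * r ^ k)"
    by (rule norm_suminf_le[OF f g])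
  also have "\<dots> = A / (1 - r)"
    using r suminf_mult[OF summable_geometric, of r A] suminf_geometric[of r] by simp
  finally show "norm (suminf f) \<le> A / (1 - r)" .
qed

lemma exists_Basis_list_far_product:
  fixes x :: "real^'n" and Y :: "(real^'n)^'N" and Nexp :: "'N \<Rightarrow> real" and M0 :: nat
  defines "L \<equiv> \<Sum>j\<in>UNIV. nat \<lceil>Nexp j\<rceil> + M0"
  assumes far: "far_set x Y \<noteq> {}"
  obtains ds where "ds \<in> lists Basis" "M0 \<le> length ds" "length ds \<le> L"
    "(\<Prod>j\<in>far_set x Y. norm (x - Y $ j) powr Nexp j)
       \<le> real CARD('n) ^ L * \<bar>\<Prod>e\<leftarrow>ds. (\<chi> j. x - Y $ j) \<bullet> e\<bar>"
proof -
  define S where "S = far_set x Y"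
  define M where "M j = nat \<lceil>Nexp j\<rceil> + M0" for j
  obtain ds where ds: "ds \<in> lists Basis" "length ds = sum M S"
    and prod_ds: "(\<Prod>j\<in>S. norm (x - Y $ j) ^ M j) \<le> real CARD('n) ^ sum M S * \<bar>\<Prod>e\<leftarrow>ds. (\<chi> j. x - Y $ j) \<bullet> e\<bar>"
    using exists_Basis_list_prod_inner_ge[where W = "\<chi> j. x - Y $ j" and M = M and S = S] by auto
  show ?thesis
  proof (rule that[OF ds(1)])
    obtain j where "j \<in> S" using far unfolding S_def by auto
    then show "M0 \<le> length ds"
      using member_le_sum[of j S M] unfolding ds(2) M_def by simp
    show len: "length ds \<le> L"
      unfolding ds(2) L_def M_def by (rule sum_mono2) auto
    have "(\<Prod>j\<in>S. norm (x - Y $ j) powr Nexp j) \<le> (\<Prod>j\<in>S. norm (x - Y $ j) ^ M j)"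
      unfolding M_def by (intro prod_powr_le_prod_power) (auto simp: S_def far_set_def, linarith)
    also have "\<dots> \<le> real CARD('n) ^ L * \<bar>\<Prod>e\<leftarrow>ds. (\<chi> j. x - Y $ j) \<bullet> e\<bar>"
      using prod_ds len ds(2) by (intro order_trans[OF prod_ds] mult_right_mono power_increasing) auto
    finally show "(\<Prod>j\<in>far_set x Y. norm (x - Y $ j) powr Nexp j)
        \<le> real CARD('n) ^ L * \<bar>\<Prod>e\<leftarrow>ds. (\<chi> j. x - Y $ j) \<bullet> e\<bar>"
      unfolding S_def .
  qed
qed

lemma two_powr_decay_le:
  fixes m \<rho> d :: real
  assumes "0 \<le> \<rho>" "M0 \<le> l"
  shows "2 powr (real k * (m - \<rho> * real l + d)) \<le> (2 powr (m + d - \<rho> * real M0)) ^ k"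
proof -
  have "real k * (m - \<rho> * real l + d) \<le> real k * (m + d - \<rho> * real M0)"
    using assms by (intro mult_left_mono) (auto intro: mult_left_mono)
  then show ?thesis
    by (simp add: powr_realpow[symmetric] powr_powr mult.commute)
qed

lemma K_piece_geometric_decay:
  fixes a :: "real^'n \<Rightarrow> (real^'n)^'N \<Rightarrow> complex" and C :: "((real^'n)^'N) list \<Rightarrow> real"
    and \<phi>0 :: "(real^'n)^'N \<Rightarrow> real" and Nexp :: "'N \<Rightarrow> real"
  assumes LP: "LP_generator \<phi>0" and \<rho>: "0 \<le> \<rho>" "\<rho> \<le> 1"
    and order: "\<rho> > 0 \<or> (\<rho> = 0 \<and> m < - real (CARD('n) * CARD('N)))"
  obtains A r where "0 \<le> r" "r < 1" "\<And>x Y k. symbol_bounded m \<rho> C (a x) \<Longrightarrow> far_set x Y \<noteq> {} \<Longrightarrow>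
      (\<Prod>j\<in>far_set x Y. norm (x - Y $ j) powr Nexp j) * norm (K_piece a \<phi>0 x Y k) \<le> A * r ^ k"
proof -
  let ?d = "real DIM((real^'n)^'N)"
  have "\<rho> > 0 \<or> (\<rho> = 0 \<and> m < - ?d)"
    using order by (simp add: mult.commute)
  then obtain M0 :: nat where M0: "m + ?d - \<rho> * real M0 < 0"
    by (rule exists_decay_order)
  define L where "L = (\<Sum>j\<in>UNIV. nat \<lceil>Nexp j\<rceil> + M0)"
  obtain E where E0: "E \<ge> 0" and E: "\<And>ds f k W. ds \<in> lists Basis \<Longrightarrow> length ds \<le> L \<Longrightarrow>
      symbol_bounded m \<rho> C f \<Longrightarrow>
      \<bar>\<Prod>e\<leftarrow>ds. W \<bullet> e\<bar> * norm (LINT z|lborel. f z * complex_of_real (LP_piece \<phi>0 k z) * plane_wave W z)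
        \<le> E * 2 powr (real k * (m - \<rho> * real (length ds) + ?d))"
    using symbol_LP_integral_decay_uniform[OF LP \<rho>, of L m C] by auto
  define r where "r = 2 powr (m + ?d - \<rho> * real M0)"
  show ?thesis
  proof (rule that[of r "real CARD('n) ^ L * E"])
    show "0 \<le> r" "r < 1"
      using M0 unfolding r_def by (auto intro: powr_less_one)
    fix x :: "real^'n" and Y :: "(real^'n)^'N" and k :: nat
    assume f: "symbol_bounded m \<rho> C (a x)" and far: "far_set x Y \<noteq> {}"
    obtain ds where ds: "ds \<in> lists Basis" "M0 \<le> length ds" "length ds \<le> L"
      and Q_le: "(\<Prod>j\<in>far_set x Y. norm (x - Y $ j) powr Nexp j)
                   \<le> real CARD('n) ^ L * \<bar>\<Prod>e\<leftarrow>ds. (\<chi> j. x - Y $ j) \<bullet> e\<bar>"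
      by (rule exists_Basis_list_far_product[OF far, of M0 Nexp, folded L_def]) (rule that)
    define P where "P = \<bar>\<Prod>e\<leftarrow>ds. (\<chi> j. x - Y $ j) \<bullet> e\<bar>"
    have "P * norm (K_piece a \<phi>0 x Y k) \<le> E * 2 powr (real k * (m - \<rho> * real (length ds) + ?d))"
      using E[OF ds(1,3) f, where k = k and W = "\<chi> j. x - Y $ j"]
      unfolding P_def K_piece_def phase_eq_plane_wave .
    also have "\<dots> \<le> E * r ^ k"
      unfolding r_def using two_powr_decay_le[OF \<rho>(1) ds(2)] E0 by (rule mult_left_mono)
    finally have "P * norm (K_piece a \<phi>0 x Y k) \<le> E * r ^ k" .
    then have "real CARD('n) ^ L * P * norm (K_piece a \<phi>0 x Y k) \<le> real CARD('n) ^ L * E * r ^ k"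
      by (simp add: mult.assoc mult_left_mono)
    then show "(\<Prod>j\<in>far_set x Y. norm (x - Y $ j) powr Nexp j) * norm (K_piece a \<phi>0 x Y k)
        \<le> real CARD('n) ^ L * E * r ^ k"
      using order_trans[OF mult_right_mono[OF Q_le[folded P_def] norm_ge_zero]] by blast
  qed
qed

lemma K_osc_bound:
  fixes a :: "real^'n \<Rightarrow> (real^'n)^'N \<Rightarrow> complex" and C :: "((real^'n)^'N) list \<Rightarrow> real"
    and \<phi>0 :: "(real^'n)^'N \<Rightarrow> real" and Nexp :: "'N \<Rightarrow> real"
  assumes LP: "LP_generator \<phi>0" and \<rho>: "0 \<le> \<rho>" "\<rho> \<le> 1"
    and order: "\<rho> > 0 \<or> (\<rho> = 0 \<and> m < - real (CARD('n) * CARD('N)))"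
  obtains Cf where "\<And>x Y. symbol_bounded m \<rho> C (a x) \<Longrightarrow> far_set x Y \<noteq> {} \<Longrightarrow>
      summable (K_piece a \<phi>0 x Y) \<and>
      norm (K_osc a \<phi>0 x Y) \<le> Cf * (\<Prod>j\<in>far_set x Y. norm (x - Y $ j) powr (- Nexp j))"
proof -
  obtain A r where r: "0 \<le> r" "r < 1" and decay: "\<And>x Y k. symbol_bounded m \<rho> C (a x) \<Longrightarrow>
      far_set x Y \<noteq> {} \<Longrightarrow>
      (\<Prod>j\<in>far_set x Y. norm (x - Y $ j) powr Nexp j) * norm (K_piece a \<phi>0 x Y k) \<le> A * r ^ k"
    by (rule K_piece_geometric_decay[OF LP \<rho> order, where a = a and C = C and Nexp = Nexp]) (rule that)
  show ?thesis
  proof (rule that[of "A / (1 - r)"])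
    fix x :: "real^'n" and Y :: "(real^'n)^'N"
    assume f: "symbol_bounded m \<rho> C (a x)" and far: "far_set x Y \<noteq> {}"
    define Q where "Q = (\<Prod>j\<in>far_set x Y. norm (x - Y $ j) powr Nexp j)"
    have "Q > 0"
      unfolding Q_def far_set_def by (intro prod_pos) auto
    then have "norm (K_piece a \<phi>0 x Y k) \<le> (A / Q) * r ^ k" for k
      using decay[OF f far, of k] unfolding Q_def[symmetric] by (simp add: field_simps)
    from summable_geometric_bound[OF this r]
    have "summable (K_piece a \<phi>0 x Y) \<and> norm (K_osc a \<phi>0 x Y) \<le> A / Q / (1 - r)"
      unfolding K_osc_def .
    moreover have "A / Q / (1 - r) = A / (1 - r) * (\<Prod>j\<in>far_set x Y. norm (x - Y $ j) powr (- Nexp j))"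
      unfolding Q_def by (simp add: powr_minus prod_inversef[symmetric] divide_inverse ac_simps)
    ultimately show "summable (K_piece a \<phi>0 x Y) \<and>
        norm (K_osc a \<phi>0 x Y) \<le> A / (1 - r) * (\<Prod>j\<in>far_set x Y. norm (x - Y $ j) powr (- Nexp j))"
      by simp
  qed
qed

theorem corollary3p2:
  fixes a :: "real^'n \<Rightarrow> (real^'n)^'N \<Rightarrow> complex"
    and m \<rho> :: real
    and \<phi>0 :: "(real^'n)^'N \<Rightarrow> real"
    and Nexp :: "'N \<Rightarrow> real"
  assumes "0 \<le> \<rho>" "\<rho> \<le> 1"
    and "LinfS m \<rho> a"
    and "\<rho> > 0 \<or> (\<rho> = 0 \<and> m < - real (CARD('n) * CARD('N)))"
    and "LP_generator \<phi>0"
    and "\<forall>j. Nexp j \<ge> 0"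
  shows "\<exists>C. AE x in lborel. \<forall>Y. far_set x Y \<noteq> {} \<longrightarrow>
           summable (K_piece a \<phi>0 x Y) \<and>
           norm (K_osc a \<phi>0 x Y) \<le> C * (\<Prod>j\<in>far_set x Y. norm (x - Y $ j) powr (- Nexp j))"
proof -
  obtain C where C: "AE x in lborel. symbol_bounded m \<rho> C (a x)"
    using LinfS_AE_symbol_bounded[OF assms(3)] by blast
  obtain Cf where Cf: "\<And>x Y. symbol_bounded m \<rho> C (a x) \<Longrightarrow> far_set x Y \<noteq> {} \<Longrightarrow>
      summable (K_piece a \<phi>0 x Y) \<and>
      norm (K_osc a \<phi>0 x Y) \<le> Cf * (\<Prod>j\<in>far_set x Y. norm (x - Y $ j) powr (- Nexp j))"
    by (rule K_osc_bound[where a = a and C = C and Nexp = Nexp, OF assms(5,1,2,4)]) (rule that)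
  from C have "AE x in lborel. \<forall>Y. far_set x Y \<noteq> {} \<longrightarrow>
      summable (K_piece a \<phi>0 x Y) \<and>
      norm (K_osc a \<phi>0 x Y) \<le> Cf * (\<Prod>j\<in>far_set x Y. norm (x - Y $ j) powr (- Nexp j))"
  proof eventually_elim
    case (elim x)
    show ?case using Cf[OF elim] by blast
  qed
  then show ?thesis
    by blast
qed

end
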